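(* Let $T$ be a measure-preserving automorphism of a standard probability Borel space $(X,\mathcal{B},\mu)$, let $\{W_n\}_{n\in\mathbb{N}}$ be measurable subsets of $X$ and let $\{q_n\}_{n\in\mathbb{N}}$ be an increasing sequence of natural numbers. Then $\{q_n\}$ is a rigidity sequence for $T$ along $\{W_n\}$ if and only if for every $f\in L^1(X,\mathcal{B},\mu)$ we have $\chi_{W_n}(f\circ T^{q_n}-f)\to 0$ in measure.
   Context: $\{q_n\}$ is a rigidity sequence for $T$ along $\{W_n\}$ if $\mu((T^{-q_n}A\,\triangle\, A)\cap W_n)\to 0$ for every $A\in\mathcal{B}$. $\chi_W$ denotes the indicator function of $W$. *)

theory Defs
  imports "HOL-Probability.Probability"
begin

definition rigidity_seq_along ::
  "'a measure \<Rightarrow> ('a \<Rightarrow> 'a) \<Rightarrow> (nat \<Rightarrow> nat) \<Rightarrow> (nat \<Rightarrow> 'a set) \<Rightarrow> bool" where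
  "rigidity_seq_along M T q W \<longleftrightarrow>
     (\<forall>A \<in> sets M.
        (\<lambda>n. measure M (((((T ^^ q n) -` A \<inter> space M) - A) \<union> (A - ((T ^^ q n) -` A \<inter> space M)))
                          \<inter> W n)) \<longlonglongrightarrow> 0)"

definition mp_map :: "'a measure \<Rightarrow> ('a \<Rightarrow> 'a) \<Rightarrow> bool" where
  "mp_map M T \<longleftrightarrow> T \<in> measurable M M \<and> distr M M T = M"

definition tendsto_zero_in_measure :: "'a measure \<Rightarrow> (nat \<Rightarrow> 'a \<Rightarrow> real) \<Rightarrow> bool" where
  "tendsto_zero_in_measure M g \<longleftrightarrow>
     (\<forall>\<epsilon>>0. (\<lambda>n. measure M {x \<in> space M. \<epsilon> < \<bar>g n x\<bar>}) \<longlonglongrightarrow> 0)"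

end

theory Submission
  imports Defs
begin

text \<open>For an indicator \<open>\<chi>\<^sub>A\<close> the condition is rigidity itself: the difference exceeds \<open>1/2\<close>
  exactly on \<open>(S\<^sub>n\<^sup>-\<^sup>1 A \<triangle> A) \<inter> W\<^sub>n\<close>, where \<open>S\<^sub>n = T\<^sup>q\<^sup>\<^sub>n\<close>. Conversely, for a measurable \<open>f\<close>, discard
  the set where \<open>|f|\<close> or \<open>|f \<circ> S\<^sub>n|\<close> exceeds a large \<open>N\<close> (small, uniformly in \<open>n\<close>, since \<open>S\<^sub>n\<close>
  preserves \<open>\<mu>\<close>). Elsewhere, if \<open>f\<close> and \<open>f \<circ> S\<^sub>n\<close> differ by more than \<open>\<epsilon>\<close> then some level
  \<open>k\<epsilon>\<close> of the finite grid \<open>\<epsilon>\<int> \<inter> [-N, N]\<close> lies between them, so \<open>x\<close> lies in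
  \<open>S\<^sub>n\<^sup>-\<^sup>1 A\<^sub>k \<triangle> A\<^sub>k\<close> for the level set \<open>A\<^sub>k = {f \<ge> k\<epsilon>}\<close>; finitely many such sets are controlled by
  rigidity.\<close>

definition preimage_symdiff :: "'a measure \<Rightarrow> ('a \<Rightarrow> 'a) \<Rightarrow> 'a set \<Rightarrow> 'a set" where
  "preimage_symdiff M S A = ((S -` A \<inter> space M) - A) \<union> (A - (S -` A \<inter> space M))"

lemma rigidity_seq_along_iff:
  "rigidity_seq_along M T q W \<longleftrightarrow>
     (\<forall>A \<in> sets M. (\<lambda>n. measure M (preimage_symdiff M (T ^^ q n) A \<inter> W n)) \<longlonglongrightarrow> 0)"
  unfolding rigidity_seq_along_def preimage_symdiff_def ..

lemma preimage_symdiff_sets [measurable]: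
  "S \<in> measurable M M \<Longrightarrow> A \<in> sets M \<Longrightarrow> preimage_symdiff M S A \<in> sets M"
  unfolding preimage_symdiff_def using measurable_sets by blast

lemma mp_map_funpow:
  assumes "mp_map M T"
  shows "mp_map M (T ^^ m)"
proof (induction m)
  case 0
  then show ?case by (simp add: mp_map_def distr_id[unfolded id_def])
next
  case (Suc m)
  have T: "T \<in> measurable M M" "distr M M T = M" using assms by (auto simp: mp_map_def)
  have S: "T ^^ m \<in> measurable M M" "distr M M (T ^^ m) = M" using Suc by (auto simp: mp_map_def)
  have "T \<circ> T ^^ m \<in> measurable M M" using T S by (simp add: measurable_comp)
  moreover have "distr M M (T \<circ> T ^^ m) = M"
    using distr_distr[OF T(1) S(1)] T S by simp
  ultimately show ?case by (simp add: mp_map_def comp_def)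
qed

lemma mp_map_measure_vimage:
  assumes "mp_map M S" "A \<in> sets M"
  shows "measure M (S -` A \<inter> space M) = measure M A"
  using assms measure_distr[of S M M A] by (simp add: mp_map_def)

lemma indicator_diff_gt_half_eq:
  assumes "A \<in> sets M" "W \<in> sets M"
  shows "{x \<in> space M. 1/2 < \<bar>indicator W x * ((indicator A (S x) :: real) - indicator A x)\<bar>}
           = preimage_symdiff M S A \<inter> W"
  using sets.sets_into_space[OF assms(1)] sets.sets_into_space[OF assms(2)]
  by (auto simp: preimage_symdiff_def indicator_def split: if_splits)

lemma tendsto_zero_in_measure_indicator_imp_rigid:
  assumes A: "A \<in> sets M" and W: "\<And>n. W n \<in> sets M"
    and "tendsto_zero_in_measure M
           (\<lambda>n x. indicator (W n) x * ((indicator A (S n x) :: real) - indicator A x))"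
  shows "(\<lambda>n. measure M (preimage_symdiff M (S n) A \<inter> W n)) \<longlonglongrightarrow> 0"
proof -
  have "(\<lambda>n. measure M {x \<in> space M. 1/2 < \<bar>indicator (W n) x *
          ((indicator A (S n x) :: real) - indicator A x)\<bar>}) \<longlonglongrightarrow> 0"
    using assms(3) unfolding tendsto_zero_in_measure_def by (auto dest: spec[of _ "1/2"])
  then show ?thesis unfolding indicator_diff_gt_half_eq[OF A W] .
qed

lemma (in finite_measure) measure_abs_gt_tendsto_zero:
  assumes "f \<in> borel_measurable M"
  shows "(\<lambda>N. measure M {x \<in> space M. real N < \<bar>f x\<bar>}) \<longlonglongrightarrow> 0"
proof -
  have "(\<lambda>N. measure M {x \<in> space M. real N < \<bar>f x\<bar>})
          \<longlonglongrightarrow> measure M (\<Inter>N. {x \<in> space M. real N < \<bar>f x\<bar>})"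
    using assms by (intro finite_Lim_measure_decseq) (auto simp: decseq_def)
  moreover have "x \<notin> {x \<in> space M. real (nat \<lceil>\<bar>f x\<bar>\<rceil>) < \<bar>f x\<bar>}" for x
    by (simp add: not_less)
  then have "(\<Inter>N. {x \<in> space M. real N < \<bar>f x\<bar>}) = {}" by blast
  ultimately show ?thesis by simp
qed

lemma exists_int_multiple_between:
  fixes a b R e :: real
  assumes e: "e > 0" and ab: "a + e < b" and "\<bar>a\<bar> \<le> R" "\<bar>b\<bar> \<le> R"
  shows "\<exists>k::int. k \<in> {-(\<lceil>R/e\<rceil>+1)..\<lceil>R/e\<rceil>+1} \<and> a < of_int k * e \<and> of_int k * e \<le> b"
proof -
  define k where "k = \<lfloor>b/e\<rfloor>"
  have k: "of_int k \<le> b/e" "b/e < of_int k + 1" unfolding k_def by linarith+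
  have "of_int k * e \<le> b" using k(1) e by (simp add: field_simps)
  moreover have "b < (of_int k + 1) * e" using k(2) e by (simp add: field_simps)
  hence "a < of_int k * e" using ab by (simp add: algebra_simps)
  moreover have "of_int k \<le> R/e" using k \<open>\<bar>b\<bar> \<le> R\<close> e
    by (smt (verit) divide_right_mono)
  hence "k \<le> \<lceil>R/e\<rceil>+1" by linarith
  moreover have "-R/e < of_int k"
    using \<open>a < of_int k * e\<close> \<open>\<bar>a\<bar> \<le> R\<close> e by (simp add: field_simps)
  hence "-(\<lceil>R/e\<rceil>+1) \<le> k" by linarith
  ultimately show ?thesis by auto
qed

context finite_measure
begin

lemma measure_jump_le_grid_sum:
  fixes f :: "'a \<Rightarrow> real" and \<epsilon> :: real and N :: nat
  defines "K \<equiv> {-(\<lceil>real N/\<epsilon>\<rceil>+1)..\<lceil>real N/\<epsilon>\<rceil>+1}"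
    and "A \<equiv> \<lambda>k::int. {x \<in> space M. of_int k * \<epsilon> \<le> f x}"
  assumes f [measurable]: "f \<in> borel_measurable M" and S: "mp_map M S"
    and W [measurable]: "W \<in> sets M" and \<epsilon>: "\<epsilon> > 0"
  shows "measure M {x \<in> space M. \<epsilon> < \<bar>indicator W x * (f (S x) - f x)\<bar>}
           \<le> (\<Sum>k\<in>K. measure M (preimage_symdiff M S (A k) \<inter> W))
              + 2 * measure M {x \<in> space M. real N < \<bar>f x\<bar>}"
proof -
  have [measurable]: "S \<in> measurable M M" using S by (simp add: mp_map_def)
  let ?B = "{x \<in> space M. real N < \<bar>f x\<bar>}"
  let ?D = "\<lambda>k. preimage_symdiff M S (A k) \<inter> W"
  have [measurable]: "A k \<in> sets M" for k unfolding A_def by measurable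
  have cover: "{x \<in> space M. \<epsilon> < \<bar>indicator W x * (f (S x) - f x)\<bar>}
                 \<subseteq> (\<Union>k\<in>K. ?D k) \<union> ?B \<union> (S -` ?B \<inter> space M)"
  proof
    fix x assume x: "x \<in> {x \<in> space M. \<epsilon> < \<bar>indicator W x * (f (S x) - f x)\<bar>}"
    then have "x \<in> W" using \<epsilon> by (cases "x \<in> W") auto
    with x have jump: "\<epsilon> < \<bar>f (S x) - f x\<bar>" by simp
    have Sx: "S x \<in> space M" using x measurable_space[of S M M] by auto
    have "x \<in> (\<Union>k\<in>K. ?D k)" if bounded: "\<bar>f x\<bar> \<le> real N" "\<bar>f (S x)\<bar> \<le> real N"
    proof (cases "f x < f (S x)")
      case True
      with jump have "f x + \<epsilon> < f (S x)" by linarith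
      then obtain k where "k \<in> K" "f x < of_int k * \<epsilon>" "of_int k * \<epsilon> \<le> f (S x)"
        using exists_int_multiple_between[OF \<epsilon> _ bounded] unfolding K_def by blast
      then have "x \<in> ?D k" using x Sx \<open>x \<in> W\<close> by (simp add: preimage_symdiff_def A_def)
      then show ?thesis using \<open>k \<in> K\<close> by blast
    next
      case False
      with jump have "f (S x) + \<epsilon> < f x" by linarith
      then obtain k where "k \<in> K" "f (S x) < of_int k * \<epsilon>" "of_int k * \<epsilon> \<le> f x"
        using exists_int_multiple_between[OF \<epsilon> _ bounded(2,1)] unfolding K_def by blast
      then have "x \<in> ?D k" using x Sx \<open>x \<in> W\<close> by (simp add: preimage_symdiff_def A_def)
      then show ?thesis using \<open>k \<in> K\<close> by blast
    qed
    then show "x \<in> (\<Union>k\<in>K. ?D k) \<union> ?B \<union> (S -` ?B \<inter> space M)"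
      using x Sx by fastforce
  qed
  have "finite K" unfolding K_def by simp
  have "measure M {x \<in> space M. \<epsilon> < \<bar>indicator W x * (f (S x) - f x)\<bar>}
          \<le> measure M ((\<Union>k\<in>K. ?D k) \<union> ?B \<union> (S -` ?B \<inter> space M))"
    using cover \<open>finite K\<close> by (intro finite_measure_mono) auto
  also have "\<dots> \<le> measure M (\<Union>k\<in>K. ?D k) + measure M ?B + measure M (S -` ?B \<inter> space M)"
    using \<open>finite K\<close> by (intro order_trans[OF measure_Un_le] add_right_mono measure_Un_le) auto
  also have "\<dots> \<le> (\<Sum>k\<in>K. measure M (?D k)) + 2 * measure M ?B"
    using finite_measure_subadditive_finite[OF \<open>finite K\<close>, of ?D]
      mp_map_measure_vimage[OF S, of ?B] by (auto simp: image_subset_iff)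
  finally show ?thesis .
qed

lemma rigid_sets_imp_tendsto_zero_in_measure:
  fixes f :: "'a \<Rightarrow> real"
  assumes f [measurable]: "f \<in> borel_measurable M"
    and S: "\<And>n. mp_map M (S n)" and W: "\<And>n. W n \<in> sets M"
    and rigid: "\<And>A. A \<in> sets M \<Longrightarrow> (\<lambda>n. measure M (preimage_symdiff M (S n) A \<inter> W n)) \<longlonglongrightarrow> 0"
  shows "tendsto_zero_in_measure M (\<lambda>n x. indicator (W n) x * (f (S n x) - f x))"
  unfolding tendsto_zero_in_measure_def
proof (intro allI impI LIMSEQ_I)
  fix \<epsilon> e :: real assume \<epsilon>: "\<epsilon> > 0" and e: "e > 0"
  obtain N where N: "measure M {x \<in> space M. real N < \<bar>f x\<bar>} < e/3"
    using LIMSEQ_D[OF measure_abs_gt_tendsto_zero[OF f], of "e/3"] e by auto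
  define K where "K = {-(\<lceil>real N/\<epsilon>\<rceil>+1)..\<lceil>real N/\<epsilon>\<rceil>+1}"
  define A where "A k = {x \<in> space M. of_int k * \<epsilon> \<le> f x}" for k :: int
  have "A k \<in> sets M" for k unfolding A_def by measurable
  then have "(\<lambda>n. \<Sum>k\<in>K. measure M (preimage_symdiff M (S n) (A k) \<inter> W n)) \<longlonglongrightarrow> (\<Sum>k\<in>K. 0)"
    by (intro tendsto_sum rigid)
  then obtain n0 where n0:
    "\<And>n. n \<ge> n0 \<Longrightarrow> (\<Sum>k\<in>K. measure M (preimage_symdiff M (S n) (A k) \<inter> W n)) < e/3"
    using LIMSEQ_D[of _ 0 "e/3"] e by fastforce
  show "\<exists>n0. \<forall>n\<ge>n0. norm (measure M {x \<in> space M. \<epsilon> < \<bar>indicator (W n) x * (f (S n x) - f x)\<bar>} - 0) < e"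
  proof (intro exI allI impI)
    fix n assume "n \<ge> n0"
    have "measure M {x \<in> space M. \<epsilon> < \<bar>indicator (W n) x * (f (S n x) - f x)\<bar>} < e"
      using measure_jump_le_grid_sum[OF f S[of n] W[of n] \<epsilon>, of N] n0[OF \<open>n \<ge> n0\<close>] N
      unfolding K_def A_def by linarith
    then show "norm (measure M {x \<in> space M. \<epsilon> < \<bar>indicator (W n) x * (f (S n x) - f x)\<bar>} - 0) < e"
      by simp
  qed
qed

end

theorem lemma3p2:
  fixes M :: "'a::polish_space measure"
    and T :: "'a \<Rightarrow> 'a"
    and W :: "nat \<Rightarrow> 'a set"
    and q :: "nat \<Rightarrow> nat"
  assumes "prob_space M"
    and "sets M = sets borel"
    and "bij T"
    and "mp_map M T"
    and "mp_map M (inv T)"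
    and "\<And>n. W n \<in> sets M"
    and "strict_mono q"
  shows "rigidity_seq_along M T q W \<longleftrightarrow>
         (\<forall>f :: 'a \<Rightarrow> real. integrable M f \<longrightarrow>
            tendsto_zero_in_measure M
              (\<lambda>n x. indicator (W n) x * (f ((T ^^ q n) x) - f x)))"
proof -
  interpret prob_space M by fact
  have S: "mp_map M (T ^^ q n)" for n using mp_map_funpow[OF assms(4)] .
  show ?thesis
  proof
    assume "rigidity_seq_along M T q W"
    then show "\<forall>f :: 'a \<Rightarrow> real. integrable M f \<longrightarrow>
            tendsto_zero_in_measure M (\<lambda>n x. indicator (W n) x * (f ((T ^^ q n) x) - f x))"
      by (auto simp: rigidity_seq_along_iff
          intro!: rigid_sets_imp_tendsto_zero_in_measure[OF borel_measurable_integrable S assms(6)])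
  next
    assume H: "\<forall>f :: 'a \<Rightarrow> real. integrable M f \<longrightarrow>
            tendsto_zero_in_measure M (\<lambda>n x. indicator (W n) x * (f ((T ^^ q n) x) - f x))"
    show "rigidity_seq_along M T q W"
      unfolding rigidity_seq_along_iff
    proof
      fix A assume A: "A \<in> sets M"
      then have "integrable M (indicator A :: 'a \<Rightarrow> real)"
        by (intro integrable_real_indicator) (auto simp: emeasure_eq_measure)
      with H A show "(\<lambda>n. measure M (preimage_symdiff M (T ^^ q n) A \<inter> W n)) \<longlonglongrightarrow> 0"
        by (intro tendsto_zero_in_measure_indicator_imp_rigid[OF A assms(6)]) blast
    qed
  qed
qed

end
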